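(* Let $X\subseteq\mathbb{R}^k$ be a set of feasible alternatives, $\mathbf{f}=(f_1,f_2):X\to\mathbb{R}^2$ a vector criterion and $Y=\mathbf{f}(X)$. Consider three decision makers whose preference relations $\succ_1,\succ_2,\succ_3$ on $\mathbb{R}^2$ are cone relations with cones $K_1,K_2,K_3$, each $K_l$ being a convex pointed cone with $\mathbb{R}^2_+\subseteq K_l$ and $\mathbf{0}_2\notin K_l$. For $l=1,2,3$ let $$\mathbf{y}^{(l)}=\begin{pmatrix} w_1^{(l)}\\ -w_2^{(l)}\end{pmatrix},\qquad \bar{\mathbf{y}}^{(l)}=\begin{pmatrix} -v_1^{(l)}\\ v_2^{(l)}\end{pmatrix},$$ with all $w_i^{(l)},v_i^{(l)}>0$, be given such that $\mathbf{y}^{(l)}\succ_l\mathbf{0}_2$ and $\bar{\mathbf{y}}^{(l)}\succ_l\mathbf{0}_2$, where no two of $\mathbf{y}^{(1)},\mathbf{y}^{(2)},\mathbf{y}^{(3)}$ are codirectional, no two of $\bar{\mathbf{y}}^{(1)},\bar{\mathbf{y}}^{(2)},\bar{\mathbf{y}}^{(3)}$ are codirectional, and $w_1^{(l)}v_2^{(l)}-w_2^{(l)}v_1^{(l)}>0$ for every $l\in\{1,2,3\}$. Put $W(l,s)=w_1^{(l)}w_2^{(s)}-w_2^{(l)}w_1^{(s)}$ and $V(l,s)=v_2^{(l)}v_1^{(s)}-v_1^{(l)}v_2^{(s)}$. Then there exist unique indices $s_1,s_2\in\{1,2,3\}$ such that $W(l_1,s_1)>0$, $W(s_1,k_1)>0$,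 $V(l_2,s_2)>0$, $V(s_2,k_2)>0$ for some indices $l_q,k_q\in\{1,2,3\}$ with $l_q\ne k_q$, $l_q\neq s_q$, $k_q\ne s_q$ ($q=1,2$). Assume moreover that $w_1^{(s_1)}v_2^{(s_2)}-w_2^{(s_1)}v_1^{(s_2)}>0$. Define the vector criterion $\mathbf{g}=(g_1,g_2)$ on $X$ by $g_1=v_2^{(s_2)}f_1+v_1^{(s_2)}f_2$, $g_2=w_2^{(s_1)}f_1+w_1^{(s_1)}f_2$. Then $\hat P_{\mathbf{g}}(Y)\subseteq P(Y)$, where $\hat P_{\mathbf{g}}(Y)=\mathbf{f}(P_{\mathbf{g}}(X))$.
   Context: For $\mathbf{a},\mathbf{b}\in\mathbb{R}^m$, $\mathbf{a}\geq\mathbf{b}$ means $a_i\ge b_i$ for all $i$ and $\mathbf{a}\neq\mathbf{b}$; $\mathbb{R}^m_+=\{\mathbf{y}\in\mathbb{R}^m:\mathbf{y}\geq\mathbf{0}_m\}$. A binary relation $\mathfrak{R}$ on $\mathbb{R}^m$ is a cone relation with cone $K$ if $\mathbf{y}^{(1)}\mathfrak{R}\,\mathbf{y}^{(2)}\iff \mathbf{y}^{(1)}-\mathbf{y}^{(2)}\in K$. The Pareto set is $P(Y)=\{\mathbf{y}^*\in Y:\ \nexists\,\mathbf{y}\in Y,\ \mathbf{y}\geq\mathbf{y}^*\}$, and for a vector criterion $\mathbf{g}$ on $X$, $P_{\mathbf{g}}(X)=\{\mathbf{x}^*\in X:\ \nexists\,\mathbf{x}\in X,\ \mathbf{g}(\mathbf{x})\geq\mathbf{g}(\mathbf{x}^*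 )\}$. Two vectors are codirectional if one is a positive multiple of the other. *)

theory Defs
  imports "HOL-Analysis.Analysis"
begin

definition vgeq :: "real^'m \<Rightarrow> real^'m \<Rightarrow> bool" where
  "vgeq a b \<longleftrightarrow> (\<forall>i. a $ i \<ge> b $ i) \<and> a \<noteq> b"

definition pareto_set :: "(real^'m) set \<Rightarrow> (real^'m) set" where
  "pareto_set Y = {y \<in> Y. \<not> (\<exists>y'\<in>Y. vgeq y' y)}"

definition pareto_alt :: "('x \<Rightarrow> real^'m) \<Rightarrow> 'x set \<Rightarrow> 'x set" where
  "pareto_alt g X = {x \<in> X. \<not> (\<exists>x'\<in>X. vgeq (g x') (g x))}"

definition cone_relation :: "('a::real_vector \<Rightarrow> 'a \<Rightarrow> bool) \<Rightarrow> 'a set \<Rightarrow> bool" where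
  "cone_relation R K \<longleftrightarrow> (\<forall>a b. R a b \<longleftrightarrow> a - b \<in> K)"

definition pos_cone :: "'a::real_vector set \<Rightarrow> bool" where
  "pos_cone K \<longleftrightarrow> (\<forall>y\<in>K. \<forall>c>0. c *\<^sub>R y \<in> K)"

definition pointed :: "'a::real_vector set \<Rightarrow> bool" where
  "pointed K \<longleftrightarrow> (\<forall>y\<in>K. - y \<notin> K)"

definition codirectional :: "'a::real_vector \<Rightarrow> 'a \<Rightarrow> bool" where
  "codirectional a b \<longleftrightarrow> (\<exists>c>0. a = c *\<^sub>R b)"

definition nonneg_orthant :: "(real^'m) set" where
  "nonneg_orthant = {y. vgeq y 0}"

end

theory Submission
  imports Defs
begin

text \<open>
  The slopes \<open>w\<^sub>2/w\<^sub>1\<close> of three pairwise non-codirectional vectors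
  \<open>(w\<^sub>1, -w\<^sub>2)\<close> are pairwise distinct, and \<open>W(l,s) > 0\<close> says that the slope of
  \<open>l\<close> is below that of \<open>s\<close>; so \<open>s\<^sub>1\<close> is the unique index of the middle slope,
  and likewise for \<open>s\<^sub>2\<close>. The new criterion \<open>g\<close> is \<open>f\<close> followed by a matrix with
  positive entries, which maps Pareto dominance to Pareto dominance; hence an
  alternative that is Pareto optimal for \<open>g\<close> has a Pareto optimal image under \<open>f\<close>.
  Only the positivity of the coefficients of \<open>g\<close> is needed for this inclusion.
\<close>

lemma codirectional_vector2I:
  fixes a b c d :: real
  assumes "a / c > 0" and "a * d = b * c"
  shows "codirectional (vector [a, b] :: real^2) (vector [c, d])"
  unfolding codirectional_def
proof (intro exI conjI)
  have "c \<noteq> 0" using assms(1) by auto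
  then have "b = a / c * d" using assms(2) by (simp add: field_simps)
  then show "vector [a, b] = (a / c) *\<^sub>R (vector [c, d] :: real^2)"
    using \<open>c \<noteq> 0\<close> by (simp add: vec_eq_iff forall_2)
qed (fact assms(1))

lemma unique_middle_of_three:
  fixes r :: "nat \<Rightarrow> real" and P :: "nat \<Rightarrow> nat \<Rightarrow> bool"
  assumes "inj_on r {1,2,3}"
    and P: "\<forall>l\<in>{1,2,3}. \<forall>s\<in>{1,2,3}. P l s \<longleftrightarrow> r l < r s"
  shows "\<exists>!s. s \<in> {1,2,3} \<and> (\<exists>l\<in>{1,2,3}. \<exists>k\<in>{1,2,3}.
              l \<noteq> k \<and> l \<noteq> s \<and> k \<noteq> s \<and> P l s \<and> P s k)"
proof -
  have middle_iff: "(s \<in> {1,2,3} \<and> (\<exists>l\<in>{1,2,3}. \<exists>k\<in>{1,2,3}.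
              l \<noteq> k \<and> l \<noteq> s \<and> k \<noteq> s \<and> P l s \<and> P s k)) \<longleftrightarrow>
      s \<in> {1,2,3} \<and> (\<exists>l\<in>{1,2,3}. r l < r s) \<and> (\<exists>k\<in>{1,2,3}. r s < r k)" for s
  proof
    assume "s \<in> {1,2,3} \<and> (\<exists>l\<in>{1,2,3}. \<exists>k\<in>{1,2,3}.
              l \<noteq> k \<and> l \<noteq> s \<and> k \<noteq> s \<and> P l s \<and> P s k)"
    then show "s \<in> {1,2,3} \<and> (\<exists>l\<in>{1,2,3}. r l < r s) \<and> (\<exists>k\<in>{1,2,3}. r s < r k)"
      using P by blast
  next
    assume "s \<in> {1,2,3} \<and> (\<exists>l\<in>{1,2,3}. r l < r s) \<and> (\<exists>k\<in>{1,2,3}. r s < r k)"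
    then obtain l k where "s \<in> {1,2,3}" "l \<in> {1,2,3}" "k \<in> {1,2,3}" "r l < r s" "r s < r k"
      by blast
    then show "s \<in> {1,2,3} \<and> (\<exists>l\<in>{1,2,3}. \<exists>k\<in>{1,2,3}.
              l \<noteq> k \<and> l \<noteq> s \<and> k \<noteq> s \<and> P l s \<and> P s k)"
      using P by (metis less_irrefl less_trans)
  qed
  have bex3: "(\<exists>x\<in>{1,2,3::nat}. \<Phi> x) \<longleftrightarrow> \<Phi> 1 \<or> \<Phi> 2 \<or> \<Phi> 3" for \<Phi>
    by simp
  have mem3: "s \<in> {1,2,3::nat} \<longleftrightarrow> s = 1 \<or> s = 2 \<or> s = 3" for s
    by simp
  have "r 1 \<noteq> r 2" "r 1 \<noteq> r 3" "r 2 \<noteq> r 3"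
    using assms(1) by (auto dest: inj_onD)
  then show ?thesis
    unfolding middle_iff unfolding bex3 mem3 by (smt (verit))
qed

lemma unique_middle_index:
  fixes p q :: "nat \<Rightarrow> real"
  assumes pos: "\<forall>l\<in>{1,2,3}. p l > 0"
    and not_proportional: "\<forall>l\<in>{1,2,3}. \<forall>s\<in>{1,2,3}. l \<noteq> s \<longrightarrow> p l * q s \<noteq> q l * p s"
  shows "\<exists>!s. s \<in> {1,2,3} \<and> (\<exists>l\<in>{1,2,3}. \<exists>k\<in>{1,2,3}. l \<noteq> k \<and> l \<noteq> s \<and> k \<noteq> s
           \<and> p l * q s - q l * p s > 0 \<and> p s * q k - q s * p k > 0)"
proof (rule unique_middle_of_three)
  show "inj_on (\<lambda>l. q l / p l) {1,2,3}"
  proof (rule inj_onI, rule ccontr)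
    fix l s :: nat assume l: "l \<in> {1,2,3}" and s: "s \<in> {1,2,3}"
      and same_ratio: "q l / p l = q s / p s" and "l \<noteq> s"
    have "p l > 0" "p s > 0" using pos l s by blast+
    with same_ratio have "p l * q s = q l * p s" by (simp add: field_simps)
    with not_proportional l s \<open>l \<noteq> s\<close> show False by blast
  qed
  show "\<forall>l\<in>{1,2,3}. \<forall>s\<in>{1,2,3}. p l * q s - q l * p s > 0 \<longleftrightarrow> q l / p l < q s / p s"
  proof (intro ballI)
    fix l s :: nat assume "l \<in> {1,2,3}" "s \<in> {1,2,3}"
    then have "p l > 0" "p s > 0" using pos by blast+
    then show "p l * q s - q l * p s > 0 \<longleftrightarrow> q l / p l < q s / p s"
      by (simp add: field_simps)
  qed
qed

lemma vgeq_matrix_vector_mult: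
  fixes A :: "real^'n^'m"
  assumes pos: "\<And>i j. A $ i $ j > 0" and "vgeq a b"
  shows "vgeq (A *v a) (A *v b)"
proof -
  have ge: "\<forall>j. b $ j \<le> a $ j" and "a \<noteq> b"
    using \<open>vgeq a b\<close> by (auto simp: vgeq_def)
  then obtain j0 where "b $ j0 < a $ j0"
    by (metis order.not_eq_order_implies_strict vec_eq_iff)
  have strict: "(A *v b) $ i < (A *v a) $ i" for i
  proof -
    have "(A *v a) $ i - (A *v b) $ i = (\<Sum>j\<in>UNIV. A $ i $ j * (a $ j - b $ j))"
      by (simp add: matrix_vector_mult_def sum_subtractf right_diff_distrib)
    also have "\<dots> > 0"
    proof (rule sum_pos2[of _ j0])
      show "0 \<le> A $ i $ j * (a $ j - b $ j)" for j
        using pos[of i j] ge by (intro mult_nonneg_nonneg) auto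
    qed (use pos \<open>b $ j0 < a $ j0\<close> in auto)
    finally show ?thesis by simp
  qed
  then have "A *v a \<noteq> A *v b"
    by (metis less_irrefl)
  with strict show ?thesis
    unfolding vgeq_def by (blast intro: less_imp_le)
qed

lemma image_pareto_alt_subset_pareto_set:
  assumes "\<And>a b. vgeq a b \<Longrightarrow> vgeq (h a) (h b)"
  shows "f ` pareto_alt (\<lambda>x. h (f x)) X \<subseteq> pareto_set (f ` X)"
  using assms unfolding pareto_alt_def pareto_set_def by blast

lemma matrix_vector_mult_2x2:
  "(vector [vector [a, b], vector [c, d]] :: real^2^2) *v y
     = vector [a * y $ 1 + b * y $ 2, c * y $ 1 + d * y $ 2]"
  by (simp add: vec_eq_iff forall_2 matrix_vector_mult_def sum_2)

lemma image_pareto_alt_positive_2x2_subset_pareto_set: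
  fixes f :: "'x \<Rightarrow> real^2"
  assumes "a > 0" "b > 0" "c > 0" "d > 0"
  shows "f ` pareto_alt (\<lambda>x. vector [a * f x $ 1 + b * f x $ 2, c * f x $ 1 + d * f x $ 2] :: real^2) X
           \<subseteq> pareto_set (f ` X)"
proof -
  let ?A = "vector [vector [a, b], vector [c, d]] :: real^2^2"
  have "?A $ i $ j > 0" for i j
    using assms exhaust_2[of i] exhaust_2[of j] by auto
  then have "f ` pareto_alt (\<lambda>x. ?A *v f x) X \<subseteq> pareto_set (f ` X)"
    by (intro image_pareto_alt_subset_pareto_set vgeq_matrix_vector_mult)
  then show ?thesis
    by (simp only: matrix_vector_mult_2x2)
qed

theorem theorem3:
  fixes X :: "(real^'k) set"
    and f :: "real^'k \<Rightarrow> real^2"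
    and R :: "nat \<Rightarrow> real^2 \<Rightarrow> real^2 \<Rightarrow> bool"
    and K :: "nat \<Rightarrow> (real^2) set"
    and w1 w2 v1 v2 :: "nat \<Rightarrow> real"
  defines "Y \<equiv> f ` X"
  defines "W \<equiv> (\<lambda>l s. w1 l * w2 s - w2 l * w1 s)"
  defines "V \<equiv> (\<lambda>l s. v2 l * v1 s - v1 l * v2 s)"
  assumes rel: "\<forall>l\<in>{1,2,3}. cone_relation (R l) (K l)"
    and cone: "\<forall>l\<in>{1,2,3}. convex (K l) \<and> pos_cone (K l) \<and> pointed (K l)
                 \<and> nonneg_orthant \<subseteq> K l \<and> 0 \<notin> K l"
    and pos: "\<forall>l\<in>{1,2,3}. w1 l > 0 \<and> w2 l > 0 \<and> v1 l > 0 \<and> v2 l > 0"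
    and pref: "\<forall>l\<in>{1,2,3}. R l (vector [w1 l, - w2 l]) 0 \<and> R l (vector [- v1 l, v2 l]) 0"
    and ncod_y: "\<forall>l\<in>{1,2,3}. \<forall>s\<in>{1,2,3}. l \<noteq> s \<longrightarrow>
                  \<not> codirectional (vector [w1 l, - w2 l] :: real^2) (vector [w1 s, - w2 s])"
    and ncod_ybar: "\<forall>l\<in>{1,2,3}. \<forall>s\<in>{1,2,3}. l \<noteq> s \<longrightarrow>
                  \<not> codirectional (vector [- v1 l, v2 l] :: real^2) (vector [- v1 s, v2 s])"
    and det: "\<forall>l\<in>{1,2,3}. w1 l * v2 l - w2 l * v1 l > 0"
  shows "(\<exists>!s1. s1 \<in> {1,2,3} \<and> (\<exists>l\<in>{1,2,3}. \<exists>k\<in>{1,2,3}.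
              l \<noteq> k \<and> l \<noteq> s1 \<and> k \<noteq> s1 \<and> W l s1 > 0 \<and> W s1 k > 0))
       \<and> (\<exists>!s2. s2 \<in> {1,2,3} \<and> (\<exists>l\<in>{1,2,3}. \<exists>k\<in>{1,2,3}.
              l \<noteq> k \<and> l \<noteq> s2 \<and> k \<noteq> s2 \<and> V l s2 > 0 \<and> V s2 k > 0))
       \<and> (\<forall>s1\<in>{1,2,3}. \<forall>s2\<in>{1,2,3}.
            (\<exists>l\<in>{1,2,3}. \<exists>k\<in>{1,2,3}.
              l \<noteq> k \<and> l \<noteq> s1 \<and> k \<noteq> s1 \<and> W l s1 > 0 \<and> W s1 k > 0) \<longrightarrow>
            (\<exists>l\<in>{1,2,3}. \<exists>k\<in>{1,2,3}.
              l \<noteq> k \<and> l \<noteq> s2 \<and> k \<noteq> s2 \<and> V l s2 > 0 \<and> V s2 k > 0) \<longrightarrow>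
            w1 s1 * v2 s2 - w2 s1 * v1 s2 > 0 \<longrightarrow>
            (let g = (\<lambda>x. vector [v2 s2 * f x $ 1 + v1 s2 * f x $ 2,
                                   w2 s1 * f x $ 1 + w1 s1 * f x $ 2] :: real^2)
             in f ` pareto_alt g X \<subseteq> pareto_set Y))"
proof -
  have "w1 l * w2 s \<noteq> w2 l * w1 s" if "l \<in> {1,2,3}" "s \<in> {1,2,3}" "l \<noteq> s" for l s
  proof
    assume "w1 l * w2 s = w2 l * w1 s"
    then have "codirectional (vector [w1 l, - w2 l] :: real^2) (vector [w1 s, - w2 s])"
      using pos that by (intro codirectional_vector2I) auto
    with ncod_y that show False by blast
  qed
  then have W_middle: "\<exists>!s1. s1 \<in> {1,2,3} \<and> (\<exists>l\<in>{1,2,3}. \<exists>k\<in>{1,2,3}.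
              l \<noteq> k \<and> l \<noteq> s1 \<and> k \<noteq> s1 \<and> W l s1 > 0 \<and> W s1 k > 0)"
    unfolding W_def using pos by (intro unique_middle_index) auto
  have "v2 l * v1 s \<noteq> v1 l * v2 s" if "l \<in> {1,2,3}" "s \<in> {1,2,3}" "l \<noteq> s" for l s
  proof
    assume "v2 l * v1 s = v1 l * v2 s"
    then have "codirectional (vector [- v1 l, v2 l] :: real^2) (vector [- v1 s, v2 s])"
      using pos that by (intro codirectional_vector2I) (auto simp: mult.commute)
    with ncod_ybar that show False by blast
  qed
  then have V_middle: "\<exists>!s2. s2 \<in> {1,2,3} \<and> (\<exists>l\<in>{1,2,3}. \<exists>k\<in>{1,2,3}.
              l \<noteq> k \<and> l \<noteq> s2 \<and> k \<noteq> s2 \<and> V l s2 > 0 \<and> V s2 k > 0)"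
    unfolding V_def using pos by (intro unique_middle_index) auto
  show ?thesis
    unfolding Y_def Let_def
  proof (intro conjI W_middle V_middle ballI impI)
    fix s1 s2 :: nat assume "s1 \<in> {1,2,3}" "s2 \<in> {1,2,3}"
    then show "f ` pareto_alt (\<lambda>x. vector [v2 s2 * f x $ 1 + v1 s2 * f x $ 2,
                                   w2 s1 * f x $ 1 + w1 s1 * f x $ 2] :: real^2) X
                 \<subseteq> pareto_set (f ` X)"
      using pos by (intro image_pareto_alt_positive_2x2_subset_pareto_set) auto
  qed
qed

end
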